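(* Let $\ell$ be a finite linear order with $|\ell|\ge 2$, and let $\mathscr T$ be a Schröder tree on $\ell$ enriched with connected graphs (every $g_v$ connected), with root $r$ and $g=\bigvee\mathscr T$. Then $$\sigma(L(g))=\Big(\prod_{w\in\mathrm{Iv}(\mathscr T),\,w\neq r}\varphi_{N_{rw}}\big(\sigma(\mathscr L(g_w))\big)\Big)\cdot\sigma(\mathscr L(g_r)).$$
   Context: All graphs are finite and simple; $L(g)$ is the Laplacian matrix. Spectra are multisets written multiplicatively (product = multiset union). Segmented partitions and generalized composition: for a finite linear order $\ell$, a segmented partition is a tuple $\pi=(\ell_1,\dots,\ell_k)$ of nonempty consecutive segments whose concatenation is $\ell$; given graphs $g_{\ell_j}$ on $\ell_j$ and a graph $h$ on vertex set $\pi$, $\bigvee_h(g_{\ell_1},\dots,g_{\ell_k})$ is the graph on $\ell$ whose edges are those of the $g_{\ell_j}$ together with all $\{x,y\}$, $x\in\ell_i$, $y\in\ell_j$, for $\{\ell_i,\ell_j\}\in E(h)$. Graph-enriched Schröder trees: a rooted plane tree whose leaves, read left to right, are the elements of $\ell$, each internal vertex having at least two children, together with for each internal vertex $v$ a simple graph $g_v$ on vertex set $\pi_v=(\ell_{v_1},\dots,\ell_{v_k})$, where $v_1,\dots,v_k$ are the children of $v$ left to right and $\ell_u$ is the set of leaves descending from $u$ ($\ell_u=\{u\}$ for a leaf). $\mathrm{Iv}(\mathscr T)$ is the set of internal vertices; $\mathscr T_u$ the subtree rooted at $u$; $\bigvee\mathscr T$ is defined recursively ($\bigvee$ of a single leaf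 is the one-vertex graph, otherwise $\bigvee\mathscr T=\bigvee_{g_r}(\bigvee\mathscr T_{r_1},\dots,\bigvee\mathscr T_{r_k})$). The matrix $\mathscr L(g_v)$: with $n_i=|\ell_{v_i}|$ and $N_i=\sum_{s:\{\ell_{v_s},\ell_{v_i}\}\in E(g_v)}n_s$, it is the $k\times k$ matrix with diagonal entries $N_i$ and $(i,j)$ entry ($i\ne j$) equal to $-\sqrt{n_in_j}$ if $\{\ell_{v_i},\ell_{v_j}\}\in E(g_v)$ and $0$ otherwise. External valencies: for a non-root internal vertex $w$ with parent $u$, $N_w=\sum_{x:\{\ell_x,\ell_w\}\in E(g_u)}|\ell_x|$; if $r=w_0,w_1,\dots,w_m=w$ is the path from the root to $w$, then $N_{rw}=N_{w_1}+\cdots+N_{w_m}$. The shift operator: for a finite multiset $\omega$ of reals and $s\in\mathbb R$, $\varphi_s(\omega)$ is obtained by removing one occurrence of $0$ from $\omega$ if $0\in\omega$ (and removing nothing otherwise), and then adding $s$ to every remaining element. *)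

theory Defs
  imports "Jordan_Normal_Form.Char_Poly" "HOL-Library.Multiset"
begin

definition simple_graph :: "nat \<Rightarrow> nat set set \<Rightarrow> bool" where
  "simple_graph n E \<longleftrightarrow> (\<forall>e\<in>E. \<exists>x y. e = {x, y} \<and> x \<noteq> y \<and> x < n \<and> y < n)"

definition graph_connected :: "nat \<Rightarrow> nat set set \<Rightarrow> bool" where
  "graph_connected n E \<longleftrightarrow>
     (\<forall>i<n. \<forall>j<n. (\<lambda>x y. {x, y} \<in> E)\<^sup>*\<^sup>* i j)"

definition degree :: "nat set set \<Rightarrow> nat \<Rightarrow> nat" where
  "degree E x = card {y. {x, y} \<in> E \<and> y \<noteq> x}"

definition laplacian :: "nat \<Rightarrow> nat set set \<Rightarrow> real mat" where
  "laplacian n E = mat n n (\<lambda>(i, j).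
      if i = j then real (degree E i) else if {i, j} \<in> E then -1 else 0)"

definition spec :: "real mat \<Rightarrow> real multiset" where
  "spec A = proots (char_poly A)"

text \<open>A node carries the list of its children (left to right) and a graph on the
  children, whose vertices are the child indices 0..<k.  The leaves, read left to right,
  are the elements of the linear order {0..<n}.\<close>
datatype stree = Leaf | Node "stree list" "nat set set"

lemma stree_size_child: "b \<in> set ts \<Longrightarrow> size b < Suc (size_list size ts)"
  by (induct ts) auto

lemma stree_size_zip: "(a, b) \<in> set (zip xs ts) \<Longrightarrow> size b < Suc (size_list size ts)"
  by (auto dest: set_zip_rightD intro: stree_size_child)

fun nleaves :: "stree \<Rightarrow> nat" where
  "nleaves Leaf = 1"
| "nleaves (Node ts g) = sum_list (map nleaves ts)"

fun wf_stree :: "stree \<Rightarrow> bool" where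
  "wf_stree Leaf = True"
| "wf_stree (Node ts g) \<longleftrightarrow> length ts \<ge> 2 \<and> simple_graph (length ts) g \<and> (\<forall>t\<in>set ts. wf_stree t)"

fun conn_stree :: "stree \<Rightarrow> bool" where
  "conn_stree Leaf = True"
| "conn_stree (Node ts g) \<longleftrightarrow> graph_connected (length ts) g \<and> (\<forall>t\<in>set ts. conn_stree t)"

definition offset :: "stree list \<Rightarrow> nat \<Rightarrow> nat" where
  "offset ts i = sum_list (map nleaves (take i ts))"

definition block :: "stree list \<Rightarrow> nat \<Rightarrow> nat set" where
  "block ts i = {offset ts i ..< offset ts i + nleaves (ts ! i)}"

function (sequential) compose :: "stree \<Rightarrow> nat set set" where
  "compose Leaf = {}"
| "compose (Node ts g) =
     (\<Union>(i, t)\<in>set (zip [0..<length ts] ts). ((`) ((+) (offset ts i))) ` compose t)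
     \<union> {{x, y} | x y i j. {i, j} \<in> g \<and> i < length ts \<and> j < length ts \<and> x \<in> block ts i \<and> y \<in> block ts j}"

  by pat_completeness auto
termination by (relation "measure size") (auto intro: stree_size_zip)

fun subtree :: "stree \<Rightarrow> nat list \<Rightarrow> stree" where
  "subtree t [] = t"
| "subtree Leaf (i # p) = Leaf"
| "subtree (Node ts g) (i # p) = (if i < length ts then subtree (ts ! i) p else Leaf)"

function (sequential) positions :: "stree \<Rightarrow> nat list set" where
  "positions Leaf = {[]}"
| "positions (Node ts g) = insert [] (\<Union>(i, t)\<in>set (zip [0..<length ts] ts). (#) i ` positions t)"

  by pat_completeness auto
termination by (relation "measure (\<lambda>t. size t)") (auto intro: stree_size_zip)

fun is_node :: "stree \<Rightarrow> bool" where
  "is_node Leaf = False"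
| "is_node (Node ts g) = True"

definition internal_vertices :: "stree \<Rightarrow> nat list set" where
  "internal_vertices T = {p \<in> positions T. is_node (subtree T p)}"

fun children :: "stree \<Rightarrow> stree list" where
  "children Leaf = []"
| "children (Node ts g) = ts"

fun node_graph :: "stree \<Rightarrow> nat set set" where
  "node_graph Leaf = {}"
| "node_graph (Node ts g) = g"

definition Lmat :: "stree \<Rightarrow> real mat" where
  "Lmat v = (let ts = children v; g = node_graph v; k = length ts;
              n = (\<lambda>i. real (nleaves (ts ! i)));
              N = (\<lambda>i. \<Sum>s\<in>{s. s < k \<and> {s, i} \<in> g}. n s)
     in mat k k (\<lambda>(i, j). if i = j then N i
                          else if {i, j} \<in> g then - sqrt (n i * n j) else 0))"

definition ext_val :: "stree \<Rightarrow> nat \<Rightarrow> real" where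
  "ext_val u i = (let ts = children u; g = node_graph u in
     \<Sum>x\<in>{x. x < length ts \<and> {x, i} \<in> g}. real (nleaves (ts ! x)))"

text \<open>N_{rw} for the vertex at position p: sum of the external valencies along the path
  from the root (excluded) to w (included).\<close>
definition N_path :: "stree \<Rightarrow> nat list \<Rightarrow> real" where
  "N_path T p = (\<Sum>m<length p. ext_val (subtree T (take m p)) (p ! m))"

definition shift_op :: "real \<Rightarrow> real multiset \<Rightarrow> real multiset" where
  "shift_op s \<omega> = image_mset (\<lambda>x. x + s) (\<omega> - {#0#})"

end

theory Submission
  imports Defs
begin

text \<open>Number the leaves of \<open>\<Or>T\<close> child by child.  The Laplacian of the composed graph is
  then a block matrix whose block \<open>(i, i)\<close> is \<open>L\<^sub>i + N\<^sub>i I\<close>, with \<open>L\<^sub>i\<close> the Laplacian of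
  child \<open>i\<close> and \<open>N\<^sub>i\<close> its external valency, and whose block \<open>(i, j)\<close> is the all \<open>-1\<close>
  matrix if \<open>i\<close> and \<open>j\<close> are adjacent and zero otherwise.  The partition of the leaves into
  children is equitable, so a change of basis makes the matrix block triangular, and its
  characteristic polynomial is the characteristic polynomial of the quotient matrix, which is
  similar to \<open>\<L>(g\<^sub>r)\<close>, times, for each child, that of \<open>L\<^sub>i\<close> with one vertex eliminated,
  evaluated at \<open>x - N\<^sub>i\<close>.  The latter has the roots of \<open>L\<^sub>i\<close> with one zero removed, and
  induction over the tree gives the formula.\<close>

section \<open>Determinants over finite index sets\<close>

definition det_on :: "'a set \<Rightarrow> ('a \<Rightarrow> 'a \<Rightarrow> real) \<Rightarrow> real" where
  "det_on I f = (\<Sum>p | p permutes I. of_int (sign p) * (\<Prod>i\<in>I. f i (p i)))"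

lemma det_on_cong:
  assumes "\<And>a b. a \<in> I \<Longrightarrow> b \<in> I \<Longrightarrow> f a b = g a b"
  shows "det_on I f = det_on I g"
  unfolding det_on_def
proof (rule sum.cong[OF refl])
  fix p assume "p \<in> {p. p permutes I}"
  hence "p i \<in> I" if "i \<in> I" for i using that by (simp add: permutes_in_image)
  thus "of_int (sign p) * (\<Prod>i\<in>I. f i (p i)) = of_int (sign p) * (\<Prod>i\<in>I. g i (p i))"
    using assms by (metis (no_types, lifting) prod.cong)
qed

lemma det_on_empty [simp]: "det_on {} f = 1"
  unfolding det_on_def by (simp add: permutes_empty)

lemma det_on_singleton [simp]: "det_on {a} f = f a a"
  unfolding det_on_def by simp

lemma det_eq_det_on:
  assumes "A \<in> carrier_mat n n"
  shows "det A = det_on {..<n} (\<lambda>i j. A $$ (i, j))"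
  unfolding det_def'[OF assms] det_on_def by (simp add: atLeast0LessThan)

lemma bij_betw_map_permutation:
  assumes h: "bij_betw h J I"
  shows "bij_betw (map_permutation J h) {p. p permutes J} {q. q permutes I}"
proof (rule bij_betw_byWitness[where f' = "map_permutation I (inv_into J h)"])
  have h': "bij_betw (inv_into J h) I J" using h by (rule bij_betw_inv_into)
  show "\<forall>p\<in>{p. p permutes J}. map_permutation I (inv_into J h) (map_permutation J h p) = p"
    using map_permutation_compose_inv[OF h] h by (auto simp: bij_betw_inv_into_left)
  have "map_permutation J (inv_into I (inv_into J h)) (map_permutation I (inv_into J h) q) = q"
    if "q permutes I" for q
    by (rule map_permutation_compose_inv[OF h' that]) (metis bij_betw_def h' inv_into_f_f)
  moreover have "map_permutation J (inv_into I (inv_into J h)) p = map_permutation J h p"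
    if "p permutes J" for p
  proof (rule map_permutation_cong[OF _ that refl])
    show "inj_on (inv_into I (inv_into J h)) J"
      using h' by (metis bij_betw_imp_inj_on bij_betw_inv_into)
    show "inv_into I (inv_into J h) x = h x" if "x \<in> J" for x
      using h that by (simp add: bij_betw_imp_inj_on bij_betw_imp_surj_on inv_into_inv_into_eq)
  qed simp
  ultimately show "\<forall>q\<in>{q. q permutes I}. map_permutation J h (map_permutation I (inv_into J h) q) = q"
    using map_permutation_permutes[OF h'] by auto
  show "map_permutation J h ` {p. p permutes J} \<subseteq> {q. q permutes I}"
    using map_permutation_permutes[OF h] by auto
  show "map_permutation I (inv_into J h) ` {q. q permutes I} \<subseteq> {p. p permutes J}"
    using map_permutation_permutes[OF h'] by auto
qed

lemma det_on_reindex: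
  assumes h: "bij_betw h J I" and "finite J"
  shows "det_on I f = det_on J (\<lambda>a b. f (h a) (h b))"
proof -
  let ?mp = "map_permutation J h"
  have inj: "inj_on h J" using h by (rule bij_betw_imp_inj_on)
  have "det_on J (\<lambda>a b. f (h a) (h b)) =
      (\<Sum>p | p permutes J. of_int (sign (?mp p)) * (\<Prod>i\<in>I. f i (?mp p i)))"
    unfolding det_on_def
  proof (rule sum.cong[OF refl])
    fix p assume "p \<in> {p. p permutes J}"
    hence p: "p permutes J" by simp
    have "(\<Prod>i\<in>I. f i (?mp p i)) = (\<Prod>a\<in>J. f (h a) (?mp p (h a)))"
      by (rule prod.reindex_bij_betw[OF h, symmetric])
    also have "\<dots> = (\<Prod>a\<in>J. f (h a) (h (p a)))"
      by (rule prod.cong[OF refl]) (simp add: map_permutation_apply[OF inj])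
    finally show "of_int (sign p) * (\<Prod>a\<in>J. f (h a) (h (p a))) =
        of_int (sign (?mp p)) * (\<Prod>i\<in>I. f i (?mp p i))"
      using sign_map_permutation[OF inj p \<open>finite J\<close>] by simp
  qed
  also have "\<dots> = det_on I f"
    unfolding det_on_def by (rule sum.reindex_bij_betw[OF bij_betw_map_permutation[OF h]])
  finally show ?thesis by simp
qed

lemma det_on_eq_det_mat:
  assumes "bij_betw h {..<n} I"
  shows "det_on I f = det (mat n n (\<lambda>(a, b). f (h a) (h b)))"
  unfolding det_eq_det_on[OF mat_carrier] det_on_reindex[OF assms finite_lessThan]
  by (rule det_on_cong) simp

lemma obtain_bij_betw_lessThan:
  assumes "finite I"
  obtains h where "bij_betw h {..<card I} I"
  using ex_bij_betw_nat_finite[OF assms] by (auto simp: atLeast0LessThan)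

lemma det_on_mult:
  assumes "finite I"
  shows "det_on I (\<lambda>x z. \<Sum>y\<in>I. f x y * g y z) = det_on I f * det_on I g"
proof -
  obtain h where h: "bij_betw h {..<card I} I" using obtain_bij_betw_lessThan[OF assms] .
  let ?n = "card I"
  let ?F = "mat ?n ?n (\<lambda>(a, b). f (h a) (h b))" and ?G = "mat ?n ?n (\<lambda>(a, b). g (h a) (h b))"
  have "mat ?n ?n (\<lambda>(a, b). \<Sum>y\<in>I. f (h a) y * g y (h b)) = ?F * ?G"
  proof (rule eq_matI)
    fix a b assume "a < dim_row (?F * ?G)" "b < dim_col (?F * ?G)"
    hence ab: "a < ?n" "b < ?n" by auto
    have "(\<Sum>y\<in>I. f (h a) y * g y (h b)) = (\<Sum>c<?n. f (h a) (h c) * g (h c) (h b))"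
      by (rule sum.reindex_bij_betw[OF h, symmetric])
    thus "mat ?n ?n (\<lambda>(a, b). \<Sum>y\<in>I. f (h a) y * g y (h b)) $$ (a, b) = (?F * ?G) $$ (a, b)"
      using ab by (simp add: scalar_prod_def atLeast0LessThan)
  qed auto
  hence "det_on I (\<lambda>x z. \<Sum>y\<in>I. f x y * g y z) = det (?F * ?G)"
    by (simp add: det_on_eq_det_mat[OF h])
  also have "\<dots> = det ?F * det ?G" by (rule det_mult) auto
  finally show ?thesis by (simp add: det_on_eq_det_mat[OF h])
qed

lemma det_on_id:
  assumes "finite I"
  shows "det_on I (\<lambda>x y. if x = y then 1 else 0) = 1"
proof -
  obtain h where h: "bij_betw h {..<card I} I" using obtain_bij_betw_lessThan[OF assms] .
  have "mat (card I) (card I) (\<lambda>(a, b). if h a = h b then 1 else 0) = (1\<^sub>m (card I) :: real mat)"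
    using bij_betw_imp_inj_on[OF h] by (intro eq_matI) (auto simp: inj_on_def)
  thus ?thesis by (simp add: det_on_eq_det_mat[OF h])
qed

lemma det_on_similar:
  assumes "finite I"
    and inverse: "\<And>x y. x \<in> I \<Longrightarrow> y \<in> I \<Longrightarrow> (\<Sum>z\<in>I. R x z * P z y) = (if x = y then 1 else 0)"
  shows "det_on I (\<lambda>x y. \<Sum>z\<in>I. R x z * (\<Sum>w\<in>I. M z w * P w y)) = det_on I M"
proof -
  have "det_on I R * det_on I P = 1"
    using det_on_mult[OF assms(1), of R P] det_on_cong[of I _ "\<lambda>x y. if x = y then 1 else 0", OF inverse]
      det_on_id[OF assms(1)] by simp
  thus ?thesis by (simp add: det_on_mult[OF assms(1)])
qed

lemma bij_betw_lessThan_add: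
  fixes s m :: nat
  assumes "bij_betw f {..<s} A" and "bij_betw g {..<m} B" and "A \<inter> B = {}"
  shows "bij_betw (\<lambda>a. if a < s then f a else g (a - s)) {..<s + m} (A \<union> B)"
proof -
  let ?h = "\<lambda>a. if a < s then f a else g (a - s)"
  have "bij_betw ?h {..<s} A"
    using assms(1) by (rule bij_betw_cong[THEN iffD1, rotated]) auto
  moreover have "bij_betw ?h {s..<s + m} B"
  proof -
    have "bij_betw (\<lambda>a. a - s) {s..<s + m} {..<m}"
      by (rule bij_betw_byWitness[where f' = "\<lambda>a. a + s"]) auto
    from bij_betw_trans[OF this assms(2)] show ?thesis
      by (rule bij_betw_cong[THEN iffD1, rotated]) auto
  qed
  ultimately have "bij_betw ?h ({..<s} \<union> {s..<s + m}) (A \<union> B)"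
    by (rule bij_betw_combine) (use assms(3) in auto)
  moreover have "{..<s} \<union> {s..<s + m} = {..<s + m}" by auto
  ultimately show ?thesis by simp
qed

lemma det_on_block_triangular:
  assumes "finite I" and "S \<subseteq> I"
    and zero: "\<And>x y. x \<in> I - S \<Longrightarrow> y \<in> S \<Longrightarrow> f x y = 0"
  shows "det_on I f = det_on S f * det_on (I - S) f"
proof -
  define s where "s = card S"
  define m where "m = card (I - S)"
  obtain h1 where h1: "bij_betw h1 {..<s} S"
    using obtain_bij_betw_lessThan[of S] finite_subset assms(1,2) unfolding s_def by blast
  obtain h2 where h2: "bij_betw h2 {..<m} (I - S)"
    using obtain_bij_betw_lessThan[of "I - S"] assms(1) unfolding m_def by blast
  define h where "h a = (if a < s then h1 a else h2 (a - s))" for a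
  have "bij_betw h {..<s + m} (S \<union> (I - S))"
    unfolding h_def by (rule bij_betw_lessThan_add[OF h1 h2]) blast
  moreover have "S \<union> (I - S) = I" using assms(2) by auto
  ultimately have h: "bij_betw h {..<s + m} I" by simp
  define A1 where "A1 = mat s s (\<lambda>(a, b). f (h1 a) (h1 b))"
  define A2 where "A2 = mat s m (\<lambda>(a, b). f (h1 a) (h2 b))"
  define A4 where "A4 = mat m m (\<lambda>(a, b). f (h2 a) (h2 b))"
  have c: "A1 \<in> carrier_mat s s" "A2 \<in> carrier_mat s m" "A4 \<in> carrier_mat m m"
    unfolding A1_def A2_def A4_def by auto
  have "mat (s + m) (s + m) (\<lambda>(a, b). f (h a) (h b)) = four_block_mat A1 A2 (0\<^sub>m m s) A4"
  proof (rule eq_matI)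
    fix i j assume "i < dim_row (four_block_mat A1 A2 (0\<^sub>m m s) A4)"
      "j < dim_col (four_block_mat A1 A2 (0\<^sub>m m s) A4)"
    hence ij: "i < s + m" "j < s + m" using c by auto
    have "h2 (i - s) \<in> I - S" if "\<not> i < s" using h2 ij that by (auto dest: bij_betwE)
    moreover have "h1 j \<in> S" if "j < s" using h1 that by (auto dest: bij_betwE)
    ultimately show "mat (s + m) (s + m) (\<lambda>(a, b). f (h a) (h b)) $$ (i, j) =
        four_block_mat A1 A2 (0\<^sub>m m s) A4 $$ (i, j)"
      using ij c zero by (auto simp: four_block_mat_def A1_def A2_def A4_def h_def)
  qed (use c in auto)
  hence "det_on I f = det A1 * det A4"
    unfolding det_on_eq_det_mat[OF h]
    using det_four_block_mat_lower_left_zero[OF c(1,2) refl c(3)] by simp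
  thus ?thesis
    unfolding det_on_eq_det_mat[OF h1] det_on_eq_det_mat[OF h2] A1_def A4_def .
qed

lemma det_on_block_diagonal:
  assumes "finite K" and "\<And>k. k \<in> K \<Longrightarrow> finite (B k)"
    and "\<And>k k'. k \<in> K \<Longrightarrow> k' \<in> K \<Longrightarrow> k \<noteq> k' \<Longrightarrow> B k \<inter> B k' = {}"
    and "\<And>k k' x y. k \<in> K \<Longrightarrow> k' \<in> K \<Longrightarrow> k \<noteq> k' \<Longrightarrow> x \<in> B k \<Longrightarrow> y \<in> B k' \<Longrightarrow> f x y = 0"
  shows "det_on (\<Union>k\<in>K. B k) f = (\<Prod>k\<in>K. det_on (B k) f)"
  using assms
proof (induction K rule: finite_induct)
  case empty
  then show ?case by simp
next
  case (insert k K)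
  let ?U = "\<Union>k\<in>K. B k"
  have "det_on (B k \<union> ?U) f = det_on (B k) f * det_on ((B k \<union> ?U) - B k) f"
  proof (rule det_on_block_triangular)
    show "finite (B k \<union> ?U)" using insert by auto
    show "f x y = 0" if "x \<in> B k \<union> ?U - B k" "y \<in> B k" for x y
    proof -
      from that obtain k' where "k' \<in> K" "x \<in> B k'" by auto
      thus ?thesis using insert.prems(3)[of k' k x y] that insert.hyps by auto
    qed
  qed auto
  moreover have "(B k \<union> ?U) - B k = ?U" using insert.prems(2) insert.hyps by auto
  moreover have "det_on ?U f = (\<Prod>k\<in>K. det_on (B k) f)"
    by (rule insert.IH) (use insert.prems in blast)+
  ultimately show ?case using insert.hyps by simp
qed

lemma det_on_diagonal_similar:
  assumes "finite I" and "\<And>i. i \<in> I \<Longrightarrow> s i \<noteq> 0"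
  shows "det_on I (\<lambda>i j. f i j * s j / s i) = det_on I f"
  unfolding det_on_def
proof (rule sum.cong[OF refl])
  fix p assume "p \<in> {p. p permutes I}"
  hence p: "p permutes I" by simp
  have "(\<Prod>i\<in>I. f i (p i) * s (p i) / s i) =
      (\<Prod>i\<in>I. f i (p i)) * (\<Prod>i\<in>I. s (p i)) / (\<Prod>i\<in>I. s i)"
    by (simp add: prod.distrib prod_dividef)
  also have "(\<Prod>i\<in>I. s (p i)) = (\<Prod>i\<in>I. s i)"
    using prod.permute[OF p, of s] by (simp add: comp_def)
  finally show "of_int (sign p) * (\<Prod>i\<in>I. f i (p i) * s (p i) / s i) =
      of_int (sign p) * (\<Prod>i\<in>I. f i (p i))"
    using assms by (simp add: prod_zero_iff)
qed

lemma det_on_class_operations: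
  assumes fin: "finite I"
    and cls: "\<And>x. x \<in> I \<Longrightarrow> cls x \<in> K"
    and rep: "\<And>k. k \<in> K \<Longrightarrow> rep k \<in> I" "\<And>k. k \<in> K \<Longrightarrow> cls (rep k) = k"
    and row_sums: "\<And>x k. x \<in> I \<Longrightarrow> k \<in> K \<Longrightarrow> (\<Sum>y\<in>{y\<in>I. cls y = k}. M x y) = A (cls x) k"
  shows "det_on I M = det_on I (\<lambda>x y. if y \<in> rep ` K then (if x \<in> rep ` K then A (cls x) (cls y) else 0)
    else M x y - (if x \<in> rep ` K then 0 else M (rep (cls x)) y))"
proof -
  define F where "F = rep ` K"
  have in_F: "x \<in> F \<longleftrightarrow> x = rep (cls x)" if "x \<in> I" for x
    using that cls rep unfolding F_def by force
  (* P adds to the column of each representative the other columns of its class, and R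
     subtracts from every other row the row of the representative of its class. *)
  define P where "P z y = (if y \<in> F then (if cls z = cls y then 1 else 0)
    else (if z = y then 1 else 0 :: real))" for z y
  define R where "R x z = (if x = z then 1 else 0)
    - (if x \<notin> F \<and> z = rep (cls x) then 1 else 0 :: real)" for x z
  define MP where "MP z y = (\<Sum>w\<in>I. M z w * P w y)" for z y
  have sum_R: "(\<Sum>z\<in>I. R x z * h z) = h x - (if x \<notin> F then h (rep (cls x)) else 0)"
    if "x \<in> I" for x h
  proof -
    have "(\<Sum>z\<in>I. R x z * h z) = (\<Sum>z\<in>I. if x = z then h z else 0)
        - (\<Sum>z\<in>I. if x \<notin> F \<and> z = rep (cls x) then h z else 0)"
      unfolding sum_subtractf[symmetric] by (rule sum.cong) (auto simp: R_def)
    thus ?thesis using that rep cls fin by (auto simp: sum.delta')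
  qed
  have "det_on I M = det_on I (\<lambda>x y. \<Sum>z\<in>I. R x z * MP z y)"
    unfolding MP_def
  proof (rule det_on_similar[OF fin, symmetric])
    fix x y assume "x \<in> I" "y \<in> I"
    thus "(\<Sum>z\<in>I. R x z * P z y) = (if x = y then 1 else 0)"
      unfolding sum_R[OF \<open>x \<in> I\<close>] using in_F rep cls by (auto simp: P_def)
  qed
  also have "\<dots> = det_on I (\<lambda>x y. if y \<in> F then (if x \<in> F then A (cls x) (cls y) else 0)
      else M x y - (if x \<in> F then 0 else M (rep (cls x)) y))"
  proof (rule det_on_cong)
    have MP_F: "MP z y = A (cls z) (cls y)" if "z \<in> I" "y \<in> F" for z y
    proof -
      have "MP z y = (\<Sum>w\<in>I. if cls w = cls y then M z w else 0)"
        unfolding MP_def using that by (intro sum.cong) (auto simp: P_def)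
      also have "\<dots> = (\<Sum>w\<in>{w\<in>I. cls w = cls y}. M z w)"
        using fin by (simp add: sum.inter_filter)
      finally
      show ?thesis using row_sums that cls rep F_def by auto
    qed
    have MP_not_F: "MP z y = M z y" if "z \<in> I" "y \<in> I" "y \<notin> F" for z y
    proof -
      have "MP z y = (\<Sum>w\<in>I. if w = y then M z w else 0)"
        unfolding MP_def using that by (intro sum.cong) (auto simp: P_def)
      thus ?thesis using that fin by (simp add: sum.delta')
    qed
    fix x y assume "x \<in> I" "y \<in> I"
    thus "(\<Sum>z\<in>I. R x z * MP z y) = (if y \<in> F then (if x \<in> F then A (cls x) (cls y) else 0)
        else M x y - (if x \<in> F then 0 else M (rep (cls x)) y))"
      unfolding sum_R[OF \<open>x \<in> I\<close>] using MP_F MP_not_F rep cls F_def by auto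
  qed
  finally show ?thesis unfolding F_def .
qed

lemma det_on_equitable_partition:
  assumes fin: "finite I" and "finite K"
    and cls: "\<And>x. x \<in> I \<Longrightarrow> cls x \<in> K"
    and rep: "\<And>k. k \<in> K \<Longrightarrow> rep k \<in> I" "\<And>k. k \<in> K \<Longrightarrow> cls (rep k) = k"
    and row_sums: "\<And>x k. x \<in> I \<Longrightarrow> k \<in> K \<Longrightarrow> (\<Sum>y\<in>{y\<in>I. cls y = k}. M x y) = A (cls x) k"
    and off_block: "\<And>x y. x \<in> I \<Longrightarrow> y \<in> I \<Longrightarrow> cls x \<noteq> cls y \<Longrightarrow> M x y = M (rep (cls x)) y"
  shows "det_on I M = det_on K A *
    (\<Prod>k\<in>K. det_on ({x\<in>I. cls x = k} - {rep k}) (\<lambda>x y. M x y - M (rep k) y))"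
proof -
  define F where "F = rep ` K"
  define Q where "Q x y = (if y \<in> F then (if x \<in> F then A (cls x) (cls y) else 0)
    else M x y - (if x \<in> F then 0 else M (rep (cls x)) y))" for x y
  have "F \<subseteq> I" using rep F_def by auto
  have "det_on I M = det_on I Q"
    unfolding Q_def F_def by (rule det_on_class_operations) (use fin cls rep row_sums in auto)
  also have "\<dots> = det_on F Q * det_on (I - F) Q"
    by (rule det_on_block_triangular[OF fin \<open>F \<subseteq> I\<close>]) (simp add: Q_def)
  also have "det_on F Q = det_on K A"
  proof -
    have "bij_betw rep K F"
      unfolding F_def by (rule inj_on_imp_bij_betw) (metis rep(2) inj_onI)
    hence "det_on F Q = det_on K (\<lambda>i j. Q (rep i) (rep j))"
      by (rule det_on_reindex) fact
    also have "\<dots> = det_on K A"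
      by (rule det_on_cong) (use rep F_def in \<open>auto simp: Q_def\<close>)
    finally show ?thesis .
  qed
  also have "det_on (I - F) Q =
      (\<Prod>k\<in>K. det_on ({x\<in>I. cls x = k} - {rep k}) (\<lambda>x y. M x y - M (rep k) y))"
  proof -
    define B where "B k = {x\<in>I. cls x = k} - {rep k}" for k
    have U: "I - F = (\<Union>k\<in>K. B k)"
      unfolding B_def F_def using cls rep by force
    have Q_B: "Q x y = M x y - M (rep (cls x)) y" if "x \<in> I - F" "y \<in> I - F" for x y
      using that by (simp add: Q_def)
    have "det_on (I - F) Q = (\<Prod>k\<in>K. det_on (B k) Q)"
      unfolding U
    proof (rule det_on_block_diagonal[OF \<open>finite K\<close>])
      fix k k' x y assume "k \<in> K" "k' \<in> K" "k \<noteq> k'" "x \<in> B k" "y \<in> B k'"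
      moreover from this have "x \<in> I - F" "y \<in> I - F" using U by auto
      ultimately show "Q x y = 0" using Q_B off_block B_def by auto
    qed (use fin B_def in auto)
    also have "\<dots> = (\<Prod>k\<in>K. det_on (B k) (\<lambda>x y. M x y - M (rep k) y))"
    proof (rule prod.cong[OF refl], rule det_on_cong)
      fix k x y assume "k \<in> K" "x \<in> B k" "y \<in> B k"
      moreover from this have "x \<in> I - F" "y \<in> I - F" using U by auto
      ultimately show "Q x y = M x y - M (rep k) y" using Q_B B_def by auto
    qed
    finally show ?thesis unfolding B_def .
  qed
  finally show ?thesis .
qed

lemma det_on_char_row_sums_zero:
  assumes "finite I" and "r \<in> I" and "\<And>a. a \<in> I \<Longrightarrow> (\<Sum>b\<in>I. C a b) = 0"
  shows "det_on I (\<lambda>a b. (if a = b then x else 0) - C a b) =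
    x * det_on (I - {r}) (\<lambda>a b. (if a = b then x else 0) - (C a b - C r b))"
proof -
  have "det_on I (\<lambda>a b. (if a = b then x else 0) - C a b) =
      det_on {r} (\<lambda>_ _. x) * (\<Prod>k\<in>{r}. det_on ({a\<in>I. r = k} - {r})
        (\<lambda>a b. ((if a = b then x else 0) - C a b) - ((if r = b then x else 0) - C r b)))"
    by (rule det_on_equitable_partition[where cls = "\<lambda>_. r" and rep = "\<lambda>_. r"])
      (use assms in \<open>auto simp: sum_subtractf\<close>)
  moreover have "det_on ({a\<in>I. r = r} - {r})
      (\<lambda>a b. ((if a = b then x else 0) - C a b) - ((if r = b then x else 0) - C r b)) =
      det_on (I - {r}) (\<lambda>a b. (if a = b then x else 0) - (C a b - C r b))"
    by simp (rule det_on_cong, auto)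
  ultimately show ?thesis by simp
qed

lemma det_on_char_composed:
  fixes B :: "'k \<Rightarrow> 'a set"
  assumes "finite K" and fin: "\<And>k. k \<in> K \<Longrightarrow> finite (B k)" and r: "\<And>k. k \<in> K \<Longrightarrow> r k \<in> B k"
    and row_sums: "\<And>k a. k \<in> K \<Longrightarrow> a \<in> B k \<Longrightarrow> (\<Sum>b\<in>B k. C k a b) = 0"
    and M: "\<And>i a j b. i \<in> K \<Longrightarrow> a \<in> B i \<Longrightarrow> j \<in> K \<Longrightarrow> b \<in> B j \<Longrightarrow> M (i, a) (j, b) =
      (if i = j then C i a b + (if a = b then N i else 0) else if adj i j then -1 else 0)"
  shows "det_on (Sigma K B) (\<lambda>p q. (if p = q then x else 0) - M p q) =
    det_on K (\<lambda>i j. if i = j then x - N i else if adj i j then real (card (B j)) else 0) *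
    (\<Prod>k\<in>K. det_on (B k - {r k}) (\<lambda>a b. (if a = b then x - N k else 0) - (C k a b - C k (r k) b)))"
proof -
  let ?M = "\<lambda>p q. (if p = q then x else 0) - M p q"
  have block: "{q\<in>Sigma K B. fst q = k} = Pair k ` B k" if "k \<in> K" for k
    using that by auto
  have "det_on (Sigma K B) ?M =
    det_on K (\<lambda>i j. if i = j then x - N i else if adj i j then real (card (B j)) else 0) *
    (\<Prod>k\<in>K. det_on ({q\<in>Sigma K B. fst q = k} - {(k, r k)}) (\<lambda>p q. ?M p q - ?M (k, r k) q))"
  proof (rule det_on_equitable_partition[where cls = fst and rep = "\<lambda>k. (k, r k)"])
    fix p j assume p: "p \<in> Sigma K B" and j: "j \<in> K"
    obtain i a where [simp]: "p = (i, a)" and i: "i \<in> K" and a: "a \<in> B i" using p by auto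
    have "(\<Sum>q\<in>{q\<in>Sigma K B. fst q = j}. ?M p q) = (\<Sum>b\<in>B j. ?M (i, a) (j, b))"
      unfolding block[OF j] by (simp add: sum.reindex inj_on_def)
    also have "\<dots> = (if i = j then x - N i else if adj i j then real (card (B j)) else 0)"
    proof (cases "i = j")
      case True
      have "(\<Sum>b\<in>B j. ?M (i, a) (j, b)) =
          (\<Sum>b\<in>B i. (if a = b then x - N i else 0) - C i a b)"
        using True i a by (intro sum.cong) (auto simp: M)
      also have "\<dots> = x - N i"
        using row_sums[OF i a] fin[OF i] a by (simp add: sum_subtractf)
      finally show ?thesis using True by simp
    qed (use i j a in \<open>simp add: M\<close>)
    finally show "(\<Sum>q\<in>{q\<in>Sigma K B. fst q = j}. ?M p q) =
        (if fst p = j then x - N (fst p) else if adj (fst p) j then real (card (B j)) else 0)"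
      by simp
  qed (use assms in \<open>auto simp: M\<close>)
  also have "(\<Prod>k\<in>K. det_on ({q\<in>Sigma K B. fst q = k} - {(k, r k)}) (\<lambda>p q. ?M p q - ?M (k, r k) q)) =
      (\<Prod>k\<in>K. det_on (B k - {r k}) (\<lambda>a b. (if a = b then x - N k else 0) - (C k a b - C k (r k) b)))"
  proof (rule prod.cong[OF refl])
    fix k assume k: "k \<in> K"
    have "bij_betw (Pair k) (B k - {r k}) ({q\<in>Sigma K B. fst q = k} - {(k, r k)})"
      unfolding block[OF k] by (rule bij_betwI[where g = snd]) auto
    from det_on_reindex[OF this]
    have "det_on ({q\<in>Sigma K B. fst q = k} - {(k, r k)}) (\<lambda>p q. ?M p q - ?M (k, r k) q) =
        det_on (B k - {r k}) (\<lambda>a b. ?M (k, a) (k, b) - ?M (k, r k) (k, b))"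
      using fin[OF k] by simp
    also have "\<dots> = det_on (B k - {r k}) (\<lambda>a b. (if a = b then x - N k else 0) - (C k a b - C k (r k) b))"
      by (rule det_on_cong) (use k r in \<open>auto simp: M\<close>)
    finally show "det_on ({q\<in>Sigma K B. fst q = k} - {(k, r k)}) (\<lambda>p q. ?M p q - ?M (k, r k) q) =
      det_on (B k - {r k}) (\<lambda>a b. (if a = b then x - N k else 0) - (C k a b - C k (r k) b))" .
  qed
  finally show ?thesis .
qed

section \<open>Shifting the roots of a polynomial\<close>

lemma pcompose_power_left: "pcompose (p ^ n) q = pcompose p q ^ n"
  for p q :: "'a :: comm_semiring_1 poly"
  by (induct n) (simp_all add: pcompose_mult pcompose_1)

lemma pcompose_shift_nonzero: "p \<noteq> 0 \<Longrightarrow> pcompose p [:- c, 1:] \<noteq> (0 :: real poly)"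
  using pcompose_eq_0[of p "[:- c, 1:]"] by auto

lemma order_le_order_pcompose_shift:
  fixes p :: "real poly"
  assumes "p \<noteq> 0"
  shows "order (a - c) p \<le> order a (pcompose p [:- c, 1:])"
proof -
  let ?m = "order (a - c) p"
  obtain r where r: "p = [:- (a - c), 1:] ^ ?m * r" using order_1[of "a - c" p] by (elim dvdE)
  have "pcompose p [:- c, 1:] = pcompose [:- (a - c), 1:] [:- c, 1:] ^ ?m * pcompose r [:- c, 1:]"
    by (subst r) (simp only: pcompose_mult pcompose_power_left)
  also have "pcompose [:- (a - c), 1:] [:- c, 1:] = [:- a, 1:]"
    by (simp add: pcompose_pCons)
  finally have "[:- a, 1:] ^ ?m dvd pcompose p [:- c, 1:]" by simp
  thus ?thesis using pcompose_shift_nonzero[OF assms] by (simp add: order_divides)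
qed

lemma order_pcompose_shift:
  fixes p :: "real poly"
  assumes "p \<noteq> 0"
  shows "order a (pcompose p [:- c, 1:]) = order (a - c) p"
proof (rule antisym)
  have "pcompose (pcompose p [:- c, 1:]) [:- (- c), 1:] = p"
    by (simp add: pcompose_assoc[symmetric] pcompose_pCons)
  with order_le_order_pcompose_shift[OF pcompose_shift_nonzero[OF assms, of c], of "a - c" "- c"]
  show "order a (pcompose p [:- c, 1:]) \<le> order (a - c) p" by simp
qed (rule order_le_order_pcompose_shift[OF assms])

lemma proots_pcompose_shift:
  fixes p :: "real poly"
  assumes "p \<noteq> 0"
  shows "proots (pcompose p [:- c, 1:]) = image_mset (\<lambda>x. x + c) (proots p)"
proof (rule multiset_eqI)
  fix a
  have "count (image_mset (\<lambda>x. x + c) (proots p)) a =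
      (\<Sum>x | x \<in># proots p \<and> a = x + c. count (proots p) x)"
    by (rule count_image_mset')
  also have "{x. x \<in># proots p \<and> a = x + c} = (if a - c \<in># proots p then {a - c} else {})"
    by auto
  finally show "count (proots (pcompose p [:- c, 1:])) a = count (image_mset (\<lambda>x. x + c) (proots p)) a"
    using assms pcompose_shift_nonzero[OF assms] by (simp add: order_pcompose_shift order_root)
qed

section \<open>Laplacians of composed graphs\<close>

lemma simple_graph_no_loop: "simple_graph n E \<Longrightarrow> {i, i} \<notin> E"
  unfolding simple_graph_def by (metis doubleton_eq_iff)

lemma real_degree_eq_sum:
  assumes "simple_graph n E"
  shows "real (degree E a) = (\<Sum>y<n. if y \<noteq> a \<and> {a, y} \<in> E then 1 else 0)"
proof -
  have "y < n" if "{a, y} \<in> E" for y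
    using assms that unfolding simple_graph_def by (metis doubleton_eq_iff)
  hence "{y. {a, y} \<in> E \<and> y \<noteq> a} = {y\<in>{..<n}. y \<noteq> a \<and> {a, y} \<in> E}" by auto
  hence "real (degree E a) = (\<Sum>y\<in>{y\<in>{..<n}. y \<noteq> a \<and> {a, y} \<in> E}. 1)"
    unfolding degree_def real_of_card by simp
  also have "\<dots> = (\<Sum>y<n. if y \<noteq> a \<and> {a, y} \<in> E then 1 else 0)"
    by (rule sum.inter_filter) simp
  finally show ?thesis .
qed

lemma laplacian_row_sum:
  assumes "simple_graph n E" "a < n"
  shows "(\<Sum>b<n. laplacian n E $$ (a, b)) = 0"
proof -
  have "(\<Sum>b<n. laplacian n E $$ (a, b)) = (\<Sum>b<n. (if b = a then real (degree E a) else 0)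
      - (if b \<noteq> a \<and> {a, b} \<in> E then 1 else 0))"
    by (rule sum.cong) (use assms(2) in \<open>auto simp: laplacian_def\<close>)
  thus ?thesis using assms by (simp add: sum_subtractf real_degree_eq_sum)
qed

definition lap :: "stree \<Rightarrow> real mat" where
  "lap t = laplacian (nleaves t) (compose t)"

definition lap_reduced :: "stree \<Rightarrow> real mat" where
  "lap_reduced t = mat (nleaves t - 1) (nleaves t - 1)
    (\<lambda>(a, b). lap t $$ (a + 1, b + 1) - lap t $$ (0, b + 1))"

lemma lap_carrier: "lap t \<in> carrier_mat (nleaves t) (nleaves t)"
  by (simp add: lap_def laplacian_def)

lemma lap_reduced_carrier: "lap_reduced t \<in> carrier_mat (nleaves t - 1) (nleaves t - 1)"
  by (simp add: lap_reduced_def)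

lemma Lmat_carrier: "Lmat t \<in> carrier_mat (length (children t)) (length (children t))"
  by (simp add: Lmat_def Let_def)

lemma nleaves_pos: "wf_stree t \<Longrightarrow> 0 < nleaves t"
proof (induction t)
  case (Node ts g)
  then obtain t where "t \<in> set ts" by (cases ts) auto
  with Node have "0 < nleaves t" by simp
  also have "nleaves t \<le> nleaves (Node ts g)"
    using \<open>t \<in> set ts\<close> by (simp add: member_le_sum_list)
  finally show ?case .
qed simp

lemma offset_Suc: "i < length ts \<Longrightarrow> offset ts (Suc i) = offset ts i + nleaves (ts ! i)"
  by (simp add: offset_def take_Suc_conv_app_nth)

lemma offset_mono: "i \<le> j \<Longrightarrow> offset ts i \<le> offset ts j"
  by (auto simp: offset_def take_add dest!: le_Suc_ex)

lemma offset_length: "offset ts (length ts) = nleaves (Node ts g)"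
  by (simp add: offset_def)

definition leaf_pairs :: "stree list \<Rightarrow> (nat \<times> nat) set" where
  "leaf_pairs ts = (SIGMA i:{..<length ts}. {..<nleaves (ts ! i)})"

definition leaf_pos :: "stree list \<Rightarrow> nat \<times> nat \<Rightarrow> nat" where
  "leaf_pos ts = (\<lambda>(i, a). offset ts i + a)"

lemma leaf_pos_bounds:
  assumes "(i, a) \<in> leaf_pairs ts"
  shows "offset ts i \<le> leaf_pos ts (i, a)" "leaf_pos ts (i, a) < offset ts (Suc i)"
  using assms by (auto simp: leaf_pairs_def leaf_pos_def offset_Suc)

lemma inj_on_leaf_pos: "inj_on (leaf_pos ts) (leaf_pairs ts)"
proof -
  have less: "leaf_pos ts (i, a) < leaf_pos ts (j, b)"
    if "(i, a) \<in> leaf_pairs ts" "(j, b) \<in> leaf_pairs ts" "i < j" for i a j b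
    using leaf_pos_bounds[OF that(1)] leaf_pos_bounds[OF that(2)] offset_mono[of "Suc i" j ts] that(3)
    by linarith
  show ?thesis
  proof (rule inj_onI, clarify)
    fix i a j b assume ia: "(i, a) \<in> leaf_pairs ts" and jb: "(j, b) \<in> leaf_pairs ts"
      and eq: "leaf_pos ts (i, a) = leaf_pos ts (j, b)"
    have "i = j" using less[OF ia jb] less[OF jb ia] eq by (cases i j rule: linorder_cases) auto
    with eq show "i = j \<and> a = b" by (simp add: leaf_pos_def)
  qed
qed

lemma finite_leaf_pairs: "finite (leaf_pairs ts)"
  by (simp add: leaf_pairs_def)

lemma bij_betw_leaf_pos: "bij_betw (leaf_pos ts) (leaf_pairs ts) {..<nleaves (Node ts g)}"
proof -
  have "leaf_pos ts p < nleaves (Node ts g)" if "p \<in> leaf_pairs ts" for p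
    using that leaf_pos_bounds[of "fst p" "snd p" ts] offset_mono[of "Suc (fst p)" "length ts" ts]
      offset_length[of ts g] by (force simp: leaf_pairs_def)
  moreover have "card (leaf_pairs ts) = nleaves (Node ts g)"
    by (simp add: leaf_pairs_def sum_list_sum_nth atLeast0LessThan)
  hence "card (leaf_pos ts ` leaf_pairs ts) = card {..<nleaves (Node ts g)}"
    by (simp add: card_image[OF inj_on_leaf_pos])
  ultimately have "leaf_pos ts ` leaf_pairs ts = {..<nleaves (Node ts g)}"
    by (intro card_subset_eq) auto
  thus ?thesis using inj_on_leaf_pos by (simp add: bij_betw_def)
qed

lemma sum_leaves_Node:
  "(\<Sum>y<nleaves (Node ts g). h y) = (\<Sum>i<length ts. \<Sum>a<nleaves (ts ! i). h (leaf_pos ts (i, a)))"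
  unfolding sum.reindex_bij_betw[OF bij_betw_leaf_pos, symmetric]
  by (simp add: leaf_pairs_def sum.Sigma)

lemma block_eq_leaf_pos:
  "y \<in> block ts i \<longleftrightarrow> (\<exists>a<nleaves (ts ! i). y = leaf_pos ts (i, a))"
  by (auto simp: block_def leaf_pos_def intro!: exI[where x = "y - offset ts i"])

lemma set_zip_upt: "set (zip [0..<length xs] xs) = (\<lambda>i. (i, xs ! i)) ` {..<length xs}"
proof -
  have "(i, x) \<in> set (zip [0..<length xs] xs) \<longleftrightarrow> i < length xs \<and> x = xs ! i" for i x
    by (auto simp: in_set_zip intro!: exI[where x = i])
  thus ?thesis by force
qed

lemma compose_Node_iff:
  "e \<in> compose (Node ts g) \<longleftrightarrow>
    (\<exists>i<length ts. e \<in> (`) ((+) (offset ts i)) ` compose (ts ! i)) \<or>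
    (\<exists>x y i j. e = {x, y} \<and> {i, j} \<in> g \<and> i < length ts \<and> j < length ts \<and>
      x \<in> block ts i \<and> y \<in> block ts j)"
  unfolding compose.simps set_zip_upt by blast

lemma leaf_pos_lt: "p \<in> leaf_pairs ts \<Longrightarrow> leaf_pos ts p < nleaves (Node ts g)"
  using bij_betwE[OF bij_betw_leaf_pos] by blast

lemma simple_graph_compose: "wf_stree t \<Longrightarrow> simple_graph (nleaves t) (compose t)"
proof (induction t)
  case (Node ts g)
  have g: "simple_graph (length ts) g" using Node.prems by simp
  show ?case unfolding simple_graph_def
  proof
    fix e assume "e \<in> compose (Node ts g)"
    then consider (child) i e' where "i < length ts" "e' \<in> compose (ts ! i)" "e = (+) (offset ts i) ` e'"
      | (cross) x y i j where "e = {x, y}" "{i, j} \<in> g" "i < length ts" "j < length ts"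
          "x \<in> block ts i" "y \<in> block ts j"
      unfolding compose_Node_iff by blast
    thus "\<exists>x y. e = {x, y} \<and> x \<noteq> y \<and> x < nleaves (Node ts g) \<and> y < nleaves (Node ts g)"
    proof cases
      case child
      with Node have "simple_graph (nleaves (ts ! i)) (compose (ts ! i))" by simp
      then obtain c d where "e' = {c, d}" "c \<noteq> d" "c < nleaves (ts ! i)" "d < nleaves (ts ! i)"
        using child(2) unfolding simple_graph_def by blast
      moreover from this have "(i, c) \<in> leaf_pairs ts" "(i, d) \<in> leaf_pairs ts"
        using child(1) by (auto simp: leaf_pairs_def)
      ultimately show ?thesis
        using child(3) leaf_pos_lt[of "(i, c)" ts g] leaf_pos_lt[of "(i, d)" ts g]
        by (intro exI[of _ "leaf_pos ts (i, c)"] exI[of _ "leaf_pos ts (i, d)"]) (auto simp: leaf_pos_def)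
    next
      case cross
      then obtain a b where ab: "a < nleaves (ts ! i)" "x = leaf_pos ts (i, a)"
        "b < nleaves (ts ! j)" "y = leaf_pos ts (j, b)"
        by (auto simp: block_eq_leaf_pos)
      hence "(i, a) \<in> leaf_pairs ts" "(j, b) \<in> leaf_pairs ts"
        using cross by (auto simp: leaf_pairs_def)
      moreover have "i \<noteq> j" using cross(2) simple_graph_no_loop[OF g] by auto
      ultimately have "x \<noteq> y" using ab inj_on_eq_iff[OF inj_on_leaf_pos] by blast
      thus ?thesis using ab cross(1) leaf_pos_lt[of "(i, a)" ts g] leaf_pos_lt[of "(j, b)" ts g]
        \<open>(i, a) \<in> leaf_pairs ts\<close> \<open>(j, b) \<in> leaf_pairs ts\<close> by blast
    qed
  qed
qed (simp add: simple_graph_def)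

lemma edge_compose_NodeD:
  assumes wf: "wf_stree (Node ts g)" and p: "p \<in> leaf_pairs ts" and q: "q \<in> leaf_pairs ts"
    and edge: "{leaf_pos ts p, leaf_pos ts q} \<in> compose (Node ts g)"
  shows "if fst p = fst q then {snd p, snd q} \<in> compose (ts ! fst p) else {fst p, fst q} \<in> g"
proof -
  have g: "simple_graph (length ts) g" using wf by simp
  have same_edge: "{leaf_pos ts p, leaf_pos ts q} = {leaf_pos ts p', leaf_pos ts q'} \<longleftrightarrow> {p, q} = {p', q'}"
    if "p' \<in> leaf_pairs ts" "q' \<in> leaf_pairs ts" for p' q'
    using inj_on_image_eq_iff[OF inj_on_leaf_pos, where A = "{p, q}" and B = "{p', q'}"] p q that by simp
  obtain i a j b where pq: "p = (i, a)" "q = (j, b)" by (cases p, cases q)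
  consider (child) k e where "k < length ts" "e \<in> compose (ts ! k)"
      "{leaf_pos ts p, leaf_pos ts q} = (+) (offset ts k) ` e"
    | (cross) x y k l where "{leaf_pos ts p, leaf_pos ts q} = {x, y}" "{k, l} \<in> g"
        "k < length ts" "l < length ts" "x \<in> block ts k" "y \<in> block ts l"
    using edge unfolding compose_Node_iff by blast
  thus ?thesis
  proof cases
    case child
    have "simple_graph (nleaves (ts ! k)) (compose (ts ! k))"
      using wf child(1) by (simp add: simple_graph_compose)
    then obtain c d where cd: "e = {c, d}" "c < nleaves (ts ! k)" "d < nleaves (ts ! k)"
      using child(2) unfolding simple_graph_def by blast
    hence "{leaf_pos ts p, leaf_pos ts q} = {leaf_pos ts (k, c), leaf_pos ts (k, d)}"
      using child(3) by (simp add: leaf_pos_def)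
    hence "{p, q} = {(k, c), (k, d)}"
      using same_edge cd child(1) by (simp add: leaf_pairs_def)
    thus ?thesis using cd child(2) by (auto simp: pq doubleton_eq_iff insert_commute)
  next
    case cross
    then obtain c d where cd: "c < nleaves (ts ! k)" "x = leaf_pos ts (k, c)"
      "d < nleaves (ts ! l)" "y = leaf_pos ts (l, d)"
      by (auto simp: block_eq_leaf_pos)
    hence "{p, q} = {(k, c), (l, d)}"
      using same_edge[of "(k, c)" "(l, d)"] cross by (simp add: leaf_pairs_def)
    moreover have "k \<noteq> l" using cross(2) simple_graph_no_loop[OF g] by auto
    ultimately show ?thesis using cross(2) by (auto simp: pq doubleton_eq_iff insert_commute)
  qed
qed

lemma edge_compose_NodeI:
  assumes p: "p \<in> leaf_pairs ts" and q: "q \<in> leaf_pairs ts"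
    and edge: "if fst p = fst q then {snd p, snd q} \<in> compose (ts ! fst p) else {fst p, fst q} \<in> g"
  shows "{leaf_pos ts p, leaf_pos ts q} \<in> compose (Node ts g)"
proof -
  obtain i a j b where pq: "p = (i, a)" "q = (j, b)" by (cases p, cases q)
  have "i < length ts" "j < length ts" using p q pq by (auto simp: leaf_pairs_def)
  show ?thesis
  proof (cases "i = j")
    case True
    have "{leaf_pos ts p, leaf_pos ts q} \<in> (`) ((+) (offset ts i)) ` compose (ts ! i)"
      by (rule image_eqI[where x = "{a, b}"]) (use edge True pq in \<open>auto simp: leaf_pos_def\<close>)
    thus ?thesis using \<open>i < length ts\<close> unfolding compose_Node_iff by blast
  next
    case False
    have "leaf_pos ts p \<in> block ts i" "leaf_pos ts q \<in> block ts j"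
      using p q pq by (auto simp: block_eq_leaf_pos leaf_pairs_def)
    thus ?thesis using edge False \<open>i < length ts\<close> \<open>j < length ts\<close> pq
      unfolding compose_Node_iff by auto
  qed
qed

lemma edge_compose_Node:
  assumes "wf_stree (Node ts g)" and "p \<in> leaf_pairs ts" and "q \<in> leaf_pairs ts"
  shows "{leaf_pos ts p, leaf_pos ts q} \<in> compose (Node ts g) \<longleftrightarrow>
    (if fst p = fst q then {snd p, snd q} \<in> compose (ts ! fst p) else {fst p, fst q} \<in> g)"
  using edge_compose_NodeD[OF assms] edge_compose_NodeI[OF assms(2,3)] by blast

lemma ext_val_Node:
  "ext_val (Node ts g) i = (\<Sum>j<length ts. if {j, i} \<in> g then real (nleaves (ts ! j)) else 0)"
proof -
  have "ext_val (Node ts g) i = (\<Sum>j\<in>{j\<in>{..<length ts}. {j, i} \<in> g}. real (nleaves (ts ! j)))"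
    unfolding ext_val_def by simp
  also have "\<dots> = (\<Sum>j<length ts. if {j, i} \<in> g then real (nleaves (ts ! j)) else 0)"
    by (rule sum.inter_filter) simp
  finally show ?thesis .
qed

lemma degree_compose_Node:
  assumes wf: "wf_stree (Node ts g)" and p: "(i, a) \<in> leaf_pairs ts"
  shows "real (degree (compose (Node ts g)) (leaf_pos ts (i, a))) =
    real (degree (compose (ts ! i)) a) + ext_val (Node ts g) i"
proof -
  let ?E = "compose (Node ts g)"
  let ?adj = "\<lambda>y. if y \<noteq> leaf_pos ts (i, a) \<and> {leaf_pos ts (i, a), y} \<in> ?E then 1 else 0 :: real"
  have i: "i < length ts" using p by (simp add: leaf_pairs_def)
  have "(\<Sum>b<nleaves (ts ! j). ?adj (leaf_pos ts (j, b))) =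
      (if j = i then real (degree (compose (ts ! i)) a) else 0)
      + (if {j, i} \<in> g then real (nleaves (ts ! j)) else 0)" if j: "j < length ts" for j
  proof -
    have jb: "(j, b) \<in> leaf_pairs ts" if "b < nleaves (ts ! j)" for b
      using j that by (simp add: leaf_pairs_def)
    have neq: "leaf_pos ts (j, b) \<noteq> leaf_pos ts (i, a) \<longleftrightarrow> (j, b) \<noteq> (i, a)"
      if "b < nleaves (ts ! j)" for b
      using inj_on_eq_iff[OF inj_on_leaf_pos jb[OF that] p] by simp
    show ?thesis
    proof (cases "j = i")
      case True
      have "(\<Sum>b<nleaves (ts ! j). ?adj (leaf_pos ts (j, b))) =
          (\<Sum>b<nleaves (ts ! i). if b \<noteq> a \<and> {a, b} \<in> compose (ts ! i) then 1 else 0)"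
        using True edge_compose_Node[OF wf p jb] neq
        by (intro sum.cong) (auto simp del: compose.simps)
      also have "\<dots> = real (degree (compose (ts ! i)) a)"
        using real_degree_eq_sum[OF simple_graph_compose, of "ts ! i" a] wf i by simp
      finally show ?thesis using True simple_graph_no_loop[of "length ts" g] wf by simp
    next
      case False
      have "(\<Sum>b<nleaves (ts ! j). ?adj (leaf_pos ts (j, b))) =
          (\<Sum>b<nleaves (ts ! j). if {j, i} \<in> g then 1 else 0)"
        using False edge_compose_Node[OF wf p jb] neq
        by (intro sum.cong) (auto simp: insert_commute simp del: compose.simps)
      thus ?thesis using False by simp
    qed
  qed
  hence "(\<Sum>y<nleaves (Node ts g). ?adj y) = real (degree (compose (ts ! i)) a) + ext_val (Node ts g) i"
    unfolding sum_leaves_Node using i by (simp add: sum.distrib ext_val_Node)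
  thus ?thesis using real_degree_eq_sum[OF simple_graph_compose[OF wf]] by simp
qed

lemma lap_Node_leaf_pos:
  assumes wf: "wf_stree (Node ts g)" and p: "p \<in> leaf_pairs ts" and q: "q \<in> leaf_pairs ts"
  shows "lap (Node ts g) $$ (leaf_pos ts p, leaf_pos ts q) =
    (if fst p = fst q then lap (ts ! fst p) $$ (snd p, snd q) + (if p = q then ext_val (Node ts g) (fst p) else 0)
     else if {fst p, fst q} \<in> g then -1 else 0)"
proof -
  obtain i a j b where pq: "p = (i, a)" "q = (j, b)" by (cases p, cases q)
  have bounds: "a < nleaves (ts ! i)" "b < nleaves (ts ! j)" using p q pq by (auto simp: leaf_pairs_def)
  have "leaf_pos ts p = leaf_pos ts q \<longleftrightarrow> p = q" using inj_on_eq_iff[OF inj_on_leaf_pos p q] .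
  thus ?thesis
    using leaf_pos_lt[OF p, of g] leaf_pos_lt[OF q, of g] bounds
      degree_compose_Node[OF wf p[unfolded pq]] edge_compose_Node[OF wf p q]
    by (auto simp: pq lap_def laplacian_def simp del: nleaves.simps compose.simps)
qed

section \<open>Characteristic polynomials and spectra\<close>

lemma char_poly_nonzero: "A \<in> carrier_mat n n \<Longrightarrow> char_poly A \<noteq> (0 :: real poly)"
  using degree_monic_char_poly[of A n] by auto

lemma poly_char_poly_eq_det_on:
  assumes "A \<in> carrier_mat n n"
  shows "poly (char_poly A) x = det_on {..<n} (\<lambda>a b. (if a = b then x else 0) - A $$ (a, b))"
  unfolding char_poly_matrix[OF assms] det_eq_det_on[OF uminus_carrier_mat[OF char_matrix_closed[OF assms]]]
  by (rule det_on_cong) (use assms in \<open>auto simp: char_matrix_def\<close>)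

lemma image_mset_sum:
  "image_mset f (\<Sum>x\<in>A. g x) = (\<Sum>x\<in>A. image_mset f (g x))"
  by (induction A rule: infinite_finite_induct) auto

lemma lap_row_sum: "wf_stree t \<Longrightarrow> a < nleaves t \<Longrightarrow> (\<Sum>b<nleaves t. lap t $$ (a, b)) = 0"
  unfolding lap_def by (rule laplacian_row_sum[OF simple_graph_compose])

lemma poly_char_poly_lap_reduced:
  "poly (char_poly (lap_reduced t)) y = det_on ({..<nleaves t} - {0})
    (\<lambda>a b. (if a = b then y else 0) - (lap t $$ (a, b) - lap t $$ (0, b)))"
proof -
  have Suc: "bij_betw Suc {..<nleaves t - 1} ({..<nleaves t} - {0})"
    by (rule bij_betwI[where g = "\<lambda>a. a - 1"]) auto
  show ?thesis
    unfolding poly_char_poly_eq_det_on[OF lap_reduced_carrier] det_on_reindex[OF Suc finite_lessThan]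
    by (rule det_on_cong) (auto simp: lap_reduced_def)
qed

lemma char_poly_lap:
  assumes "wf_stree t"
  shows "char_poly (lap t) = [:0, 1:] * char_poly (lap_reduced t)"
proof -
  have "poly (char_poly (lap t)) x = x * poly (char_poly (lap_reduced t)) x" for x
    unfolding poly_char_poly_eq_det_on[OF lap_carrier] poly_char_poly_lap_reduced
    by (rule det_on_char_row_sums_zero) (use assms nleaves_pos lap_row_sum in auto)
  hence "poly (char_poly (lap t)) = poly ([:0, 1:] * char_poly (lap_reduced t))" by auto
  thus ?thesis by (simp only: poly_eq_poly_eq_iff)
qed

lemma spec_lap: "wf_stree t \<Longrightarrow> spec (lap t) = add_mset 0 (spec (lap_reduced t))"
  unfolding spec_def char_poly_lap
  by (subst proots_mult) (use char_poly_nonzero[OF lap_reduced_carrier] in auto)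

lemma Lmat_Node_entry:
  assumes "i < length ts" "j < length ts"
  shows "Lmat (Node ts g) $$ (i, j) = (if i = j then ext_val (Node ts g) i
     else if {i, j} \<in> g then - sqrt (real (nleaves (ts ! i)) * real (nleaves (ts ! j))) else 0)"
  using assms by (simp add: Lmat_def ext_val_def Let_def)

text \<open>Conjugating by \<open>diag(\<surd>n\<^sub>i)\<close> turns \<open>\<L>(g)\<close> into the quotient matrix of the Laplacian of
  the composed graph with respect to the partition into the children's leaves.\<close>

lemma poly_char_poly_Lmat:
  assumes "wf_stree (Node ts g)"
  shows "poly (char_poly (Lmat (Node ts g))) x = det_on {..<length ts}
    (\<lambda>i j. if i = j then x - ext_val (Node ts g) i else if {i, j} \<in> g then real (nleaves (ts ! j)) else 0)"
proof -
  define s where "s i = sqrt (real (nleaves (ts ! i)))" for i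
  have pos: "0 < nleaves (ts ! i)" if "i < length ts" for i
    using that assms nleaves_pos[of "ts ! i"] by simp
  hence s: "s i \<noteq> 0" if "i < length ts" for i
    using that by (simp add: s_def)
  have "poly (char_poly (Lmat (Node ts g))) x =
      det_on {..<length ts} (\<lambda>i j. ((if i = j then x else 0) - Lmat (Node ts g) $$ (i, j)) * s j / s i)"
    using poly_char_poly_eq_det_on[OF Lmat_carrier] det_on_diagonal_similar[of "{..<length ts}" s] s
    by simp
  also have "\<dots> = det_on {..<length ts}
      (\<lambda>i j. if i = j then x - ext_val (Node ts g) i else if {i, j} \<in> g then real (nleaves (ts ! j)) else 0)"
  proof (rule det_on_cong)
    fix i j assume "i \<in> {..<length ts}" "j \<in> {..<length ts}"
    moreover from this have "sqrt (real (nleaves (ts ! i)) * real (nleaves (ts ! j))) * s j / s i =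
        real (nleaves (ts ! j))"
      using pos[of i] pos[of j] by (simp add: s_def real_sqrt_mult)
    ultimately show "((if i = j then x else 0) - Lmat (Node ts g) $$ (i, j)) * s j / s i =
        (if i = j then x - ext_val (Node ts g) i else if {i, j} \<in> g then real (nleaves (ts ! j)) else 0)"
      using s by (auto simp: Lmat_Node_entry)
  qed
  finally show ?thesis .
qed

lemma zero_in_spec_Lmat:
  assumes wf: "wf_stree (Node ts g)"
  shows "0 \<in># spec (Lmat (Node ts g))"
proof -
  let ?C = "\<lambda>i j. (if i = j then ext_val (Node ts g) i else 0)
    - (if {j, i} \<in> g then real (nleaves (ts ! j)) else 0)"
  have "length ts > 0" using wf by auto
  have "poly (char_poly (Lmat (Node ts g))) 0 =
      det_on {..<length ts} (\<lambda>i j. (if i = j then 0 else 0) - ?C i j)"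
    unfolding poly_char_poly_Lmat[OF wf]
    by (rule det_on_cong) (use simple_graph_no_loop[of "length ts" g] wf in \<open>auto simp: insert_commute\<close>)
  also have "\<dots> = 0 * det_on ({..<length ts} - {0}) (\<lambda>i j. (if i = j then 0 else 0) - (?C i j - ?C 0 j))"
    by (rule det_on_char_row_sums_zero) (use \<open>length ts > 0\<close> in \<open>auto simp: sum_subtractf ext_val_Node\<close>)
  finally show ?thesis
    unfolding spec_def using char_poly_nonzero[OF Lmat_carrier] by simp
qed

lemma poly_char_poly_lap_Node:
  assumes wf: "wf_stree (Node ts g)"
  shows "poly (char_poly (lap (Node ts g))) x = poly (char_poly (Lmat (Node ts g))) x *
    (\<Prod>i<length ts. poly (char_poly (lap_reduced (ts ! i))) (x - ext_val (Node ts g) i))"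
proof -
  let ?T = "Node ts g"
  have "poly (char_poly (lap ?T)) x = det_on (leaf_pairs ts)
      (\<lambda>p q. (if p = q then x else 0) - lap ?T $$ (leaf_pos ts p, leaf_pos ts q))"
    unfolding poly_char_poly_eq_det_on[OF lap_carrier]
      det_on_reindex[OF bij_betw_leaf_pos finite_leaf_pairs]
    by (rule det_on_cong) (simp add: inj_on_eq_iff[OF inj_on_leaf_pos])
  also have "\<dots> = det_on {..<length ts} (\<lambda>i j. if i = j then x - ext_val ?T i
        else if {i, j} \<in> g then real (card {..<nleaves (ts ! j)}) else 0) *
      (\<Prod>i<length ts. det_on ({..<nleaves (ts ! i)} - {0}) (\<lambda>a b. (if a = b then x - ext_val ?T i else 0)
        - (lap (ts ! i) $$ (a, b) - lap (ts ! i) $$ (0, b))))"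
    unfolding leaf_pairs_def
  proof (rule det_on_char_composed)
    fix i a j b assume "i \<in> {..<length ts}" "a \<in> {..<nleaves (ts ! i)}"
      "j \<in> {..<length ts}" "b \<in> {..<nleaves (ts ! j)}"
    thus "lap ?T $$ (leaf_pos ts (i, a), leaf_pos ts (j, b)) = (if i = j then lap (ts ! i) $$ (a, b)
        + (if a = b then ext_val ?T i else 0) else if {i, j} \<in> g then -1 else 0)"
      using lap_Node_leaf_pos[OF wf, of "(i, a)" "(j, b)"] by (simp add: leaf_pairs_def)
  qed (use wf nleaves_pos lap_row_sum in auto)
  finally show ?thesis
    using wf by (simp add: poly_char_poly_Lmat poly_char_poly_lap_reduced cong: if_cong)
qed

lemma spec_lap_Node:
  assumes wf: "wf_stree (Node ts g)"
  shows "spec (lap (Node ts g)) = spec (Lmat (Node ts g)) +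
    (\<Sum>i<length ts. image_mset (\<lambda>y. y + ext_val (Node ts g) i) (spec (lap_reduced (ts ! i))))"
proof -
  have "char_poly (lap (Node ts g)) = char_poly (Lmat (Node ts g)) *
      (\<Prod>i<length ts. pcompose (char_poly (lap_reduced (ts ! i))) [:- ext_val (Node ts g) i, 1:])"
    unfolding poly_eq_poly_eq_iff[symmetric]
    by (rule ext) (simp add: poly_char_poly_lap_Node[OF wf] poly_prod poly_pcompose)
  thus ?thesis
    unfolding spec_def
    using char_poly_nonzero[OF Lmat_carrier] char_poly_nonzero[OF lap_reduced_carrier]
      pcompose_shift_nonzero
    by (simp add: proots_mult proots_prod proots_pcompose_shift)
qed

lemma positions_Node:
  "positions (Node ts g) = insert [] (\<Union>i<length ts. (#) i ` positions (ts ! i))"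
  by (simp add: set_zip_upt)

lemma finite_internal_vertices: "finite (internal_vertices t)"
proof -
  have "finite (positions t)"
    by (induction t) (auto simp: set_zip_upt)
  thus ?thesis unfolding internal_vertices_def by simp
qed

lemma root_in_internal_vertices: "[] \<in> internal_vertices (Node ts g)"
  by (simp add: internal_vertices_def)

lemma sum_internal_vertices_Node:
  "(\<Sum>p\<in>internal_vertices (Node ts g) - {[]}. F p) =
    (\<Sum>i<length ts. \<Sum>q\<in>internal_vertices (ts ! i). F (i # q))"
proof -
  have "internal_vertices (Node ts g) - {[]} = (\<Union>i<length ts. (#) i ` internal_vertices (ts ! i))"
    unfolding internal_vertices_def positions_Node by auto
  hence "(\<Sum>p\<in>internal_vertices (Node ts g) - {[]}. F p) =
      (\<Sum>i<length ts. \<Sum>p\<in>(#) i ` internal_vertices (ts ! i). F p)"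
    by (simp only:) (rule sum.UNION_disjoint, auto simp: finite_internal_vertices)
  also have "\<dots> = (\<Sum>i<length ts. \<Sum>q\<in>internal_vertices (ts ! i). F (i # q))"
    by (simp add: sum.reindex)
  finally show ?thesis .
qed

lemma N_path_Cons:
  assumes "i < length ts"
  shows "N_path (Node ts g) (i # q) = ext_val (Node ts g) i + N_path (ts ! i) q"
proof -
  have "N_path (Node ts g) (i # q) = ext_val (subtree (Node ts g) []) i +
      (\<Sum>m<length q. ext_val (subtree (Node ts g) (take (Suc m) (i # q))) ((i # q) ! Suc m))"
    unfolding N_path_def by (simp only: length_Cons sum.lessThan_Suc_shift) simp
  thus ?thesis using assms by (simp add: N_path_def)
qed

lemma spec_lap_reduced_Leaf: "spec (lap_reduced Leaf) = {#}"
proof -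
  have "poly (char_poly (lap_reduced Leaf)) = poly 1"
    by (rule ext) (simp add: poly_char_poly_eq_det_on[OF lap_reduced_carrier])
  thus ?thesis by (simp add: spec_def poly_eq_poly_eq_iff)
qed

text \<open>Shifting by an arbitrary \<open>c\<close> is what makes the induction go through: the spectrum of a
  child enters the spectrum of its parent shifted by its external valency.\<close>

lemma image_spec_lap_reduced:
  "wf_stree t \<Longrightarrow> image_mset (\<lambda>y. y + c) (spec (lap_reduced t)) =
    (\<Sum>p\<in>internal_vertices t. shift_op (N_path t p + c) (spec (Lmat (subtree t p))))"
proof (induction t arbitrary: c)
  case Leaf
  have "internal_vertices Leaf = {}" by (auto simp: internal_vertices_def)
  thus ?case by (simp add: spec_lap_reduced_Leaf)
next
  case (Node ts g)
  let ?T = "Node ts g"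
  let ?F = "\<lambda>p. shift_op (N_path ?T p + c) (spec (Lmat (subtree ?T p)))"
  have children: "image_mset (\<lambda>y. y + (ext_val ?T i + c)) (spec (lap_reduced (ts ! i))) =
      (\<Sum>q\<in>internal_vertices (ts ! i). ?F (i # q))" if "i < length ts" for i
    using Node.IH[OF nth_mem[OF that], of "ext_val ?T i + c"] Node.prems that
    by (simp add: N_path_Cons add_ac)
  let ?S = "\<Sum>i<length ts. image_mset (\<lambda>y. y + ext_val ?T i) (spec (lap_reduced (ts ! i)))"
  have "spec (lap_reduced ?T) = spec (lap ?T) - {#0#}"
    using spec_lap[OF Node.prems] by simp
  also have "\<dots> = ?S + spec (Lmat ?T) - {#0#}"
    using spec_lap_Node[OF Node.prems] by (simp add: add.commute)
  also have "\<dots> = ?S + (spec (Lmat ?T) - {#0#})"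
    by (rule diff_union_single_conv[OF zero_in_spec_Lmat[OF Node.prems]])
  finally have "image_mset (\<lambda>y. y + c) (spec (lap_reduced ?T)) =
      (\<Sum>i<length ts. image_mset (\<lambda>y. y + (ext_val ?T i + c)) (spec (lap_reduced (ts ! i))))
      + shift_op c (spec (Lmat ?T))"
    by (simp add: shift_op_def image_mset_sum image_mset.compositionality comp_def add.assoc)
  also have "\<dots> = (\<Sum>p\<in>internal_vertices ?T - {[]}. ?F p) + ?F []"
    by (simp add: children sum_internal_vertices_Node N_path_def)
  also have "\<dots> = (\<Sum>p\<in>internal_vertices ?T. ?F p)"
    by (simp add: sum.remove[OF finite_internal_vertices root_in_internal_vertices] add.commute)
  finally show ?case .
qed

theorem mainTheorem3:
  fixes T :: stree and n :: nat
  assumes "wf_stree T" and "conn_stree T"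
    and "nleaves T = n" and "n \<ge> 2"
  shows "spec (laplacian n (compose T)) =
    (\<Sum>p\<in>internal_vertices T - {[]}. shift_op (N_path T p) (spec (Lmat (subtree T p))))
    + spec (Lmat T)"
proof -
  obtain ts g where T: "T = Node ts g" using assms(3,4) by (cases T) auto
  hence root: "[] \<in> internal_vertices T" by (simp add: root_in_internal_vertices)
  let ?F = "\<lambda>p. shift_op (N_path T p) (spec (Lmat (subtree T p)))"
  have "spec (laplacian n (compose T)) = add_mset 0 (spec (lap_reduced T))"
    using spec_lap[OF assms(1)] assms(3) by (simp add: lap_def)
  also have "spec (lap_reduced T) = (\<Sum>p\<in>internal_vertices T. ?F p)"
    using image_spec_lap_reduced[OF assms(1), of 0] by simp
  also have "\<dots> = ?F [] + (\<Sum>p\<in>internal_vertices T - {[]}. ?F p)"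
    by (rule sum.remove[OF finite_internal_vertices root])
  also have "?F [] = spec (Lmat T) - {#0#}"
    by (simp add: shift_op_def N_path_def)
  also have "add_mset 0 (spec (Lmat T) - {#0#} + (\<Sum>p\<in>internal_vertices T - {[]}. ?F p)) =
      (\<Sum>p\<in>internal_vertices T - {[]}. ?F p) + spec (Lmat T)"
    using zero_in_spec_Lmat[of ts g] assms(1) T by (simp add: add.commute)
  finally show ?thesis .
qed

end
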